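(* Let $S$ be a solenoid. Then the Cartesian product $[0,1]\times S$ has the fupcon property; that is, for every continuum $M\subseteq [0,1]\times S$ with $\pi_{[0,1]}(M)=[0,1]$ and $\pi_S(M)=S$, and for every open set $U\subseteq [0,1]\times S$ with $M\subseteq U$, there exists an open connected set $V$ with $M\subseteq V\subseteq U$.
   Context: A continuum is a nonempty compact connected Hausdorff space (here metric). A solenoid is a continuum homeomorphic to an inverse limit $\varprojlim\{\mathbb{S}^1, f_i\}$ of unit circles $\mathbb{S}^1\subseteq\mathbb{C}$ with bonding maps $f_i(z)=z^{n_i}$, where each $n_i\geq 2$ is an integer. For a product $X\times Y$ of continua, $\pi_X,\pi_Y$ denote the coordinate projections. $X\times Y$ has the fupcon property if every subcontinuum $M\subseteq X\times Y$ with full projections ($\pi_X(M)=X$ and $\pi_Y(M)=Y$) has arbitrarily small open connected neighborhoods, i.e. for every open $U\supseteq M$ there is an open connected $V$ with $M\subseteq V\subseteq U$. *)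

theory Defs
  imports "HOL-Analysis.Analysis"
begin

text \<open>The inverse limit of unit circles with bonding maps f_i(z) = z^(n i),
  f_i : S^1_(i+1) -> S^1_i, as a subspace of the product space of countably many
  copies of the complex plane.\<close>
definition solenoid_inverse_limit :: "(nat \<Rightarrow> nat) \<Rightarrow> (nat \<Rightarrow> complex) topology" where
  "solenoid_inverse_limit n =
     subtopology (product_topology (\<lambda>i. euclidean) UNIV)
       {z. \<forall>i. z i \<in> sphere 0 1 \<and> z i = (z (Suc i)) ^ (n i)}"

definition solenoid :: "'a topology \<Rightarrow> bool" where
  "solenoid X \<longleftrightarrow> (\<exists>n. (\<forall>i. n i \<ge> 2) \<and> X homeomorphic_space solenoid_inverse_limit n)"

definition continuum_in :: "'a topology \<Rightarrow> 'a set \<Rightarrow> bool" where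
  "continuum_in X M \<longleftrightarrow> M \<noteq> {} \<and> compactin X M \<and> connectedin X M"

definition fupcon :: "'a topology \<Rightarrow> 'b topology \<Rightarrow> bool" where
  "fupcon X Y \<longleftrightarrow>
     (\<forall>M. continuum_in (prod_topology X Y) M \<and> fst ` M = topspace X \<and> snd ` M = topspace Y \<longrightarrow>
        (\<forall>U. openin (prod_topology X Y) U \<and> M \<subseteq> U \<longrightarrow>
           (\<exists>V. openin (prod_topology X Y) V \<and> connectedin (prod_topology X Y) V \<and> M \<subseteq> V \<and> V \<subseteq> U)))"

end

(*
  By compactness M lies
  in a cylinder {(t, s). (t, s j) \<in> W} contained in U, for some level j and open W.

  Fix (t0, s0) in M and lift the cylinder along the arc component of s0, which is parametrised
  by the flow r \<mapsto> flow r s0, to a subset of [0,1] x R; let A be the image of the path component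
  of (t0, 0). Then A is connected, and for every level l \<ge> j the set of points of the cylinder
  that A matches at level l is relatively clopen in the cylinder, so it contains M.

  Translating by multiples of the period deg 0 j preserves the lifted set. If no nonzero
  translation preserves the path component of (t0, 0), then A would contain M and be locally
  injectively parametrised, while M contains points over flow (deg 0 j * k) s0 for every k,
  whose lifts are a full period apart; compactness forbids this. A nonzero period k0 together
  with the eventual stabilisation of gcd k0 (deg j l) makes the set matched at a suitable level
  lie between A and its closure: it is the required open connected neighbourhood of M in U.
*)
theory Submission
  imports Defs
begin

lemma cis_eq_1_imp_int_multiple: "cis x = 1 \<Longrightarrow> \<exists>k::int. x = 2 * pi * of_int k"
proof -
  assume "cis x = 1"
  then have "exp (\<i> * complex_of_real x) = 1" by (simp add: cis_conv_exp)
  then obtain k :: int where "Im (\<i> * complex_of_real x) = of_int (2 * k) * pi"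
    using exp_eq_1 by blast
  then show ?thesis by (intro exI[of _ k]) simp
qed

lemma unit_eq_cis_Im_Ln:
  assumes "norm u = 1" shows "u = cis (Im (Ln u))"
proof -
  have u0: "u \<noteq> 0" using assms by auto
  have "Ln u = \<i> * complex_of_real (Im (Ln u))"
    using assms u0 by (simp add: complex_eq_iff)
  then show ?thesis using exp_Ln[OF u0] by (metis cis_conv_exp)
qed

lemma cis_near_1:
  assumes "\<epsilon> > 0" shows "\<exists>\<eta>>0. \<forall>x. \<bar>x\<bar> < \<eta> \<longrightarrow> norm (cis x - 1) < \<epsilon>"
proof -
  have "isCont cis 0" unfolding cis_conv_exp by (intro continuous_intros)
  then show ?thesis using assms unfolding continuous_at_eps_delta by (simp add: dist_norm)
qed

lemma unit_near_1_eq_cis: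
  assumes "\<eta> > 0"
  shows "\<exists>\<delta>>0. \<forall>u. norm u = 1 \<longrightarrow> norm (u - 1) < \<delta> \<longrightarrow> (\<exists>\<theta>. \<bar>\<theta>\<bar> < \<eta> \<and> u = cis (2 * pi * \<theta>))"
proof -
  have "isCont Ln 1" by (rule continuous_at_Ln) (simp add: nonpos_Reals_def)
  then have "\<exists>\<delta>>0. \<forall>u. norm (u - 1) < \<delta> \<longrightarrow> norm (Ln u) < 2 * pi * \<eta>"
    using assms unfolding continuous_at_eps_delta dist_norm by simp
  then obtain \<delta> where \<delta>: "\<delta> > 0" "\<And>u. norm (u - 1) < \<delta> \<Longrightarrow> norm (Ln u) < 2 * pi * \<eta>"
    by blast
  show ?thesis
  proof (rule exI[of _ \<delta>], intro conjI allI impI)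
    fix u :: complex assume u: "norm u = 1" "norm (u - 1) < \<delta>"
    have "\<bar>Im (Ln u) / (2 * pi)\<bar> < \<eta>"
      using abs_Im_le_cmod[of "Ln u"] \<delta>(2)[OF u(2)] by (simp add: field_simps abs_divide)
    moreover have "u = cis (2 * pi * (Im (Ln u) / (2 * pi)))"
      using unit_eq_cis_Im_Ln[OF u(1)] by simp
    ultimately show "\<exists>\<theta>. \<bar>\<theta>\<bar> < \<eta> \<and> u = cis (2 * pi * \<theta>)" by blast
  qed (rule \<delta>(1))
qed

lemma unit_pow_eq_imp_cis:
  fixes v w :: complex
  assumes "norm v = 1" "norm w = 1" "w ^ P = v ^ P" "P > 0"
  shows "\<exists>c::int. w = v * cis (2 * pi * of_int c / real P)"
proof -
  have v0: "v \<noteq> 0" using assms(1) by auto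
  define \<theta> where "\<theta> = Im (Ln (w / v))"
  have wv: "w / v = cis \<theta>"
    unfolding \<theta>_def by (rule unit_eq_cis_Im_Ln) (simp add: norm_divide assms(1,2))
  have "cis (real P * \<theta>) = 1"
    using assms(3) v0 by (simp flip: wv Complex.DeMoivre add: power_divide)
  then obtain c :: int where "real P * \<theta> = 2 * pi * of_int c"
    using cis_eq_1_imp_int_multiple by blast
  then have "\<theta> = 2 * pi * of_int c / real P" using assms(4) by (simp add: field_simps)
  moreover have "w = v * (w / v)" using v0 by simp
  ultimately show ?thesis using wv by metis
qed

lemma abs_mult_le_unit_interval:
  fixes v x :: real
  assumes "v \<in> {0..1}" shows "\<bar>v * x\<bar> \<le> \<bar>x\<bar>"
  using mult_left_le_one_le[of "\<bar>x\<bar>" v] assms by (simp add: abs_mult)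

lemma rotation_nbhd:
  fixes W :: "(real \<times> complex) set"
  assumes "open W" "(t, z) \<in> W" "norm z = 1"
  shows "\<exists>\<epsilon>>0. \<exists>\<eta>>0. \<forall>t' x. \<bar>t' - t\<bar> < \<epsilon> \<longrightarrow> \<bar>x\<bar> < \<eta> \<longrightarrow> (t', z * cis x) \<in> W"
proof -
  obtain e where e: "e > 0" "ball (t, z) e \<subseteq> W"
    using assms open_contains_ball by blast
  obtain \<eta> where \<eta>: "\<eta> > 0" "\<And>x. \<bar>x\<bar> < \<eta> \<Longrightarrow> norm (cis x - 1) < e / 2"
    using cis_near_1[of "e / 2"] e(1) by auto
  have "(t', z * cis x) \<in> W" if "\<bar>t' - t\<bar> < e / 2" "\<bar>x\<bar> < \<eta>" for t' x
  proof -
    have "z * cis x - z = z * (cis x - 1)" by (simp add: algebra_simps)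
    then have "norm (z * cis x - z) = norm (cis x - 1)"
      using assms(3) by (simp add: norm_mult)
    then have "dist (t', z * cis x) (t, z) < e"
      unfolding dist_Pair_Pair using that \<eta>(2)[OF that(2)]
      by (intro sqrt_sum_squares_half_less) (simp_all add: dist_norm)
    then show ?thesis using e(2) by (auto simp: dist_commute)
  qed
  then show ?thesis using e(1) \<eta>(1) by (intro exI[of _ "e / 2"] exI[of _ \<eta>]) auto
qed

lemma gcd_chain_stabilises:
  fixes k :: int and d :: "nat \<Rightarrow> int"
  assumes k: "k \<noteq> 0" and chain: "\<And>l l'. j \<le> l \<Longrightarrow> l \<le> l' \<Longrightarrow> d l dvd d l'"
  shows "\<exists>l0\<ge>j. \<forall>l\<ge>l0. \<exists>u v. d l0 = u * k + v * d l"
proof -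
  define G where "G l = gcd k (d l)" for l
  have G_pos: "G l > 0" for l using k by (simp add: G_def)
  have G_le: "G l \<le> \<bar>k\<bar>" for l
    using dvd_imp_le_int[OF k, of "G l"] by (simp add: G_def)
  have G_dvd: "G l dvd G l'" if "j \<le> l" "l \<le> l'" for l l'
    using chain[OF that] unfolding G_def by (meson dvd_trans gcd_dvd1 gcd_dvd2 gcd_greatest)
  have "G ` {j..} \<subseteq> {1..\<bar>k\<bar>}"
    unfolding image_subset_iff atLeastAtMost_iff using G_pos G_le by (simp add: int_one_le_iff_zero_less)
  then have fin: "finite (G ` {j..})" by (rule finite_subset) simp
  obtain l0 where l0: "l0 \<ge> j" "G l0 = Max (G ` {j..})"
    using Max_in[OF fin] by auto
  have G_eq: "G l = G l0" if "l \<ge> l0" for l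
  proof (rule antisym)
    show "G l \<le> G l0" using l0 fin that by (auto intro!: Max_ge)
    show "G l0 \<le> G l" using G_dvd[OF l0(1) that] G_pos by (intro zdvd_imp_le) auto
  qed
  show ?thesis
  proof (intro exI[of _ l0] conjI allI impI)
    fix l assume "l0 \<le> l"
    obtain q where q: "d l0 = G l * q"
      using G_eq[OF \<open>l0 \<le> l\<close>] by (metis G_def dvdE gcd_dvd2)
    obtain u v where uv: "u * k + v * d l = G l"
      using bezout_int[of k "d l"] by (auto simp: G_def)
    have "d l0 = (u * q) * k + (v * q) * d l"
      unfolding q uv[symmetric] by (simp add: algebra_simps)
    then show "\<exists>u v. d l0 = u * k + v * d l" by blast
  qed (rule l0(1))
qed

lemma nat_multiples_near_eq:
  fixes N \<rho> :: real and k1 k2 :: nat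
  assumes "N > 0" "\<bar>N * real k1 - \<rho>\<bar> < N / 2" "\<bar>N * real k2 - \<rho>\<bar> < N / 2"
  shows "k1 = k2"
proof -
  have "\<bar>N * (real k1 - real k2)\<bar> < N * 1"
    using assms(2,3) unfolding right_diff_distrib abs_less_iff by linarith
  then have "\<bar>real k1 - real k2\<bar> < 1" using assms(1) by (simp only: abs_mult) simp
  then show ?thesis by linarith
qed

lemma fupcon_homeomorphic_space:
  fixes X :: "'c topology" and Y :: "'a topology" and Y' :: "'b topology"
  assumes hom: "Y homeomorphic_space Y'" and fupcon: "fupcon X Y'"
  shows "fupcon X Y"
proof -
  obtain f g where fg: "homeomorphic_maps Y Y' f g"
    using hom homeomorphic_space_def by blast
  define h :: "'c \<times> 'a \<Rightarrow> 'c \<times> 'b" where "h = (\<lambda>(x, y). (id x, f y))"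
  define h' :: "'c \<times> 'b \<Rightarrow> 'c \<times> 'a" where "h' = (\<lambda>(x, y). (id x, g y))"
  have hh': "homeomorphic_maps (prod_topology X Y) (prod_topology X Y') h h'"
    unfolding h_def h'_def homeomorphic_maps_prod using fg homeomorphic_maps_id by blast
  then have h: "homeomorphic_map (prod_topology X Y) (prod_topology X Y') h"
    and h': "homeomorphic_map (prod_topology X Y') (prod_topology X Y) h'"
    using homeomorphic_maps_imp_map homeomorphic_maps_sym by metis+
  have h'h: "\<And>A. A \<subseteq> topspace (prod_topology X Y) \<Longrightarrow> h' ` h ` A = A"
    using hh' unfolding homeomorphic_maps_def by (force simp: image_image)
  have f_onto: "f ` topspace Y = topspace Y'"
    using fg homeomorphic_maps_imp_map homeomorphic_imp_surjective_map by blast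
  show ?thesis unfolding fupcon_def
  proof (intro allI impI, elim conjE)
    fix M U
    assume M: "continuum_in (prod_topology X Y) M" and M1: "fst ` M = topspace X"
      and M2: "snd ` M = topspace Y" and U: "openin (prod_topology X Y) U" "M \<subseteq> U"
    have MX: "M \<subseteq> topspace (prod_topology X Y)"
      using M compactin_subset_topspace continuum_in_def by blast
    have UX: "U \<subseteq> topspace (prod_topology X Y)" using U openin_subset by blast
    have "continuum_in (prod_topology X Y') (h ` M)"
      using M MX unfolding continuum_in_def
      by (simp add: homeomorphic_map_compactness[OF h] homeomorphic_map_connectedness[OF h])
    moreover have "fst ` h ` M = topspace X" using M1 by (force simp: h_def)
    moreover have "snd ` h ` M = topspace Y'"
    proof -
      have "snd ` h ` M = f ` snd ` M" by (force simp: h_def)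
      then show ?thesis using M2 f_onto by simp
    qed
    moreover have "openin (prod_topology X Y') (h ` U)"
      using homeomorphic_map_openness[OF h UX] U by blast
    ultimately obtain V' where V': "openin (prod_topology X Y') V'"
        "connectedin (prod_topology X Y') V'" "h ` M \<subseteq> V'" "V' \<subseteq> h ` U"
      using fupcon U(2) unfolding fupcon_def by (meson image_mono)
    have "V' \<subseteq> topspace (prod_topology X Y')" using V' openin_subset by blast
    then show "\<exists>V. openin (prod_topology X Y) V \<and> connectedin (prod_topology X Y) V \<and> M \<subseteq> V \<and> V \<subseteq> U"
      using V' homeomorphic_map_openness[OF h'] homeomorphic_map_connectedness[OF h']
        h'h[OF MX] h'h[OF UX] by (metis image_mono)
  qed
qed

section \<open>Solenoids as sequences of unit complex numbers\<close>

locale solenoid_seq =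
  fixes n :: "nat \<Rightarrow> nat"
  assumes n_ge_2: "\<And>i. n i \<ge> 2"
begin

definition Sol :: "(nat \<Rightarrow> complex) set" where
  "Sol = {z. \<forall>i. z i \<in> sphere 0 1 \<and> z i = z (Suc i) ^ n i}"

definition deg :: "nat \<Rightarrow> nat \<Rightarrow> nat" where
  "deg i l = (\<Prod>k\<in>{i..<l}. n k)"

text \<open>The arc components of the solenoid are the orbits of this \<real>-action; at level \<open>i\<close> it
  turns the circle once in time \<open>deg 0 i\<close>.\<close>
definition flow :: "real \<Rightarrow> (nat \<Rightarrow> complex) \<Rightarrow> nat \<Rightarrow> complex" where
  "flow r s i = s i * cis (2 * pi * r / real (deg 0 i))"

lemma n_pos: "n i > 0"
  using n_ge_2[of i] by linarith

lemma deg_refl [simp]: "deg i i = 1"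
  by (simp add: deg_def)

lemma deg_pos: "deg i l > 0"
  by (simp add: deg_def n_pos)

lemma deg_Suc: "i \<le> l \<Longrightarrow> deg i (Suc l) = deg i l * n l"
  by (simp add: deg_def prod.atLeastLessThan_Suc)

lemma deg_trans: "i \<le> k \<Longrightarrow> k \<le> l \<Longrightarrow> deg i l = deg i k * deg k l"
  unfolding deg_def by (rule prod.atLeastLessThan_concat[symmetric])

lemma pow2_le_deg: "2 ^ l \<le> deg 0 l"
proof (induction l)
  case (Suc l)
  then show ?case using mult_le_mono[OF Suc.IH n_ge_2[of l]] by (simp add: deg_Suc mult.commute)
qed simp

lemma SolD:
  assumes "s \<in> Sol" shows Sol_norm: "norm (s i) = 1" and Sol_bonding: "s i = s (Suc i) ^ n i"
  using assms unfolding Sol_def mem_Collect_eq mem_sphere_0 by blast+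

lemma Sol_nonzero: "s \<in> Sol \<Longrightarrow> s i \<noteq> 0"
  using Sol_norm[of s i] by auto

lemma Sol_pow: "s \<in> Sol \<Longrightarrow> i \<le> l \<Longrightarrow> s i = s l ^ deg i l"
proof (induction l)
  case (Suc l)
  show ?case
  proof (cases "i = Suc l")
    case False
    then have "i \<le> l" using Suc.prems by simp
    then have "s i = (s (Suc l) ^ n l) ^ deg i l"
      using Suc Sol_bonding[of s l] by simp
    then show ?thesis by (simp add: deg_Suc[OF \<open>i \<le> l\<close>] power_mult mult.commute)
  qed simp
qed simp

lemma Sol_eq_below: "s \<in> Sol \<Longrightarrow> s' \<in> Sol \<Longrightarrow> s l = s' l \<Longrightarrow> i \<le> l \<Longrightarrow> s i = s' i"
  using Sol_pow[of s i l] Sol_pow[of s' i l] by simp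

lemma Sol_eqI: "s \<in> Sol \<Longrightarrow> s' \<in> Sol \<Longrightarrow> (\<And>l. l \<ge> j \<Longrightarrow> s l = s' l) \<Longrightarrow> s = s'"
  using Sol_eq_below[of s s' "max _ j"] by (metis max.cobounded1 max.cobounded2 ext)

lemma Sol_rotation_below:
  assumes "s \<in> Sol" "s' \<in> Sol" "s' l = s l * cis x" "i \<le> l"
  shows "s' i = s i * cis (real (deg i l) * x)"
  using Sol_pow[OF assms(2,4)] Sol_pow[OF assms(1,4)] assms(3)
  by (simp add: power_mult_distrib Complex.DeMoivre)

lemma Sol_near_level_rotation:
  assumes "s \<in> Sol" "\<eta> > 0"
  shows "\<exists>\<delta>>0. \<forall>s'\<in>Sol. norm (s' l - s l) < \<delta> \<longrightarrow> (\<exists>\<theta>. \<bar>\<theta>\<bar> < \<eta> \<and> s' l = s l * cis (2 * pi * \<theta>))"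
proof -
  obtain \<delta> where \<delta>: "\<delta> > 0"
    "\<And>u. norm u = 1 \<Longrightarrow> norm (u - 1) < \<delta> \<Longrightarrow> \<exists>\<theta>. \<bar>\<theta>\<bar> < \<eta> \<and> u = cis (2 * pi * \<theta>)"
    using unit_near_1_eq_cis[OF assms(2)] by blast
  have "\<exists>\<theta>. \<bar>\<theta>\<bar> < \<eta> \<and> s' l = s l * cis (2 * pi * \<theta>)"
    if s': "s' \<in> Sol" "norm (s' l - s l) < \<delta>" for s'
  proof -
    have sl: "norm (s l) = 1" "s l \<noteq> 0" using Sol_norm[OF assms(1)] Sol_nonzero[OF assms(1)] .
    have "s' l / s l - 1 = (s' l - s l) / s l" using sl by (simp add: field_simps)
    then have "norm (s' l / s l - 1) < \<delta>" using s'(2) sl by (simp add: norm_divide)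
    moreover have "norm (s' l / s l) = 1" using Sol_norm[OF s'(1)] sl by (simp add: norm_divide)
    ultimately obtain \<theta> where \<theta>: "\<bar>\<theta>\<bar> < \<eta>" "s' l / s l = cis (2 * pi * \<theta>)" using \<delta>(2) by blast
    then have "s' l = s l * cis (2 * pi * \<theta>)" using sl by (simp add: field_simps)
    with \<theta>(1) show ?thesis by blast
  qed
  then show ?thesis using \<delta>(1) by blast
qed

lemma flow_zero [simp]: "flow 0 s = s"
  by (rule ext) (simp add: flow_def)

lemma flow_add: "flow a (flow b s) = flow (a + b) s"
  by (simp add: flow_def fun_eq_iff cis_mult add_divide_distrib distrib_left add_ac mult.assoc)

lemma flow_shift: "flow (r + d) s i = flow r s i * cis (2 * pi * d / real (deg 0 i))"
  by (simp add: flow_def cis_mult add_divide_distrib distrib_left mult.assoc)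

lemma flow_shift_level: "flow (r + real (deg 0 l) * \<theta>) s l = flow r s l * cis (2 * pi * \<theta>)"
  using flow_shift[of r "real (deg 0 l) * \<theta>" s l] deg_pos[of 0 l] by (simp add: mult.assoc)

lemma flow_in_Sol:
  assumes s: "s \<in> Sol" shows "flow r s \<in> Sol"
proof -
  have "flow r s i = flow r s (Suc i) ^ n i" for i
  proof -
    have e: "real (n i) * (2 * pi * r / real (deg 0 (Suc i))) = 2 * pi * r / real (deg 0 i)"
      using n_pos[of i] deg_pos[of 0 i] by (simp add: deg_Suc field_simps)
    have "cis (2 * pi * r / real (deg 0 (Suc i))) ^ n i = cis (2 * pi * r / real (deg 0 i))"
      unfolding Complex.DeMoivre e ..
    then show ?thesis
      unfolding flow_def power_mult_distrib by (subst Sol_bonding[OF s, of i]) simp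
  qed
  moreover have "norm (flow r s i) = 1" for i
    by (simp add: flow_def norm_mult Sol_norm[OF s])
  ultimately show ?thesis unfolding Sol_def mem_sphere_0 by blast
qed

lemma flow_period:
  assumes "i \<le> l" shows "flow (r + real (deg 0 l) * of_int c) s i = flow r s i"
proof -
  have "2 * pi * (real (deg 0 l) * of_int c) / real (deg 0 i) = 2 * pi * of_int (int (deg i l) * c)"
    using deg_trans[OF _ assms, of 0] deg_pos[of 0 i] by (simp add: field_simps)
  then show ?thesis by (simp add: flow_shift)
qed

lemma flow_eq_at_level:
  assumes "s \<in> Sol" "flow r s i = flow r' s i"
  shows "\<exists>k::int. r = r' + real (deg 0 i) * of_int k"
proof -
  define x where "x = (r - r') / real (deg 0 i)"
  have "flow r' s i * cis (2 * pi * x) = flow r' s i"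
    using assms(2) flow_shift[of r' "r - r'" s i] by (simp add: x_def)
  moreover have "flow r' s i \<noteq> 0" using Sol_nonzero[OF flow_in_Sol[OF assms(1)]] .
  ultimately have "cis (2 * pi * x) = 1" by simp
  then obtain k :: int where "2 * pi * x = 2 * pi * of_int k"
    using cis_eq_1_imp_int_multiple by blast
  then have "x = of_int k" by simp
  then have "r = r' + real (deg 0 i) * of_int k"
    using deg_pos[of 0 i] by (simp add: x_def field_simps)
  then show ?thesis ..
qed

lemma flow_fixed_point: assumes "s \<in> Sol" "flow r s = s" shows "r = 0"
proof -
  obtain l where l: "\<bar>r\<bar> < 2 ^ l" using real_arch_pow[of 2 "\<bar>r\<bar>"] by auto
  obtain k :: int where k: "r = real (deg 0 l) * of_int k"
    using flow_eq_at_level[OF assms(1), of r l 0] assms(2) by auto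
  have "(2::real) ^ l \<le> real (deg 0 l)"
    using pow2_le_deg[of l] by (metis of_nat_le_iff of_nat_numeral of_nat_power)
  then have "\<bar>real (deg 0 l) * of_int k\<bar> < real (deg 0 l)" using l k by linarith
  then have "k = 0" using deg_pos[of 0 l] by (simp add: abs_mult)
  then show ?thesis using k by simp
qed

lemma flow_inj: assumes "s \<in> Sol" "flow r s = flow r' s" shows "r = r'"
proof -
  have "flow (r - r') s = flow (- r') (flow r s)" by (simp add: flow_add)
  also have "\<dots> = s" using assms(2) by (simp add: flow_add)
  finally have "r - r' = 0" by (rule flow_fixed_point[OF assms(1)])
  then show ?thesis by simp
qed

lemma continuous_on_flow: "continuous_on UNIV (\<lambda>p :: real \<times> (nat \<Rightarrow> complex). flow (fst p) (snd p))"
proof (intro continuous_on_coordinatewise_then_product)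
  fix i
  have "continuous_on UNIV (\<lambda>p :: real \<times> (nat \<Rightarrow> complex). snd p i)"
    by (rule continuous_on_product_then_coordinatewise[OF continuous_on_snd[OF continuous_on_id]])
  then show "continuous_on UNIV (\<lambda>p :: real \<times> (nat \<Rightarrow> complex). flow (fst p) (snd p) i)"
    unfolding flow_def cis_conv_exp using deg_pos[of 0 i] by (intro continuous_intros) simp_all
qed

lemma Sol_nbhd_level:
  assumes T: "open T" "s \<in> T" and s: "s \<in> Sol"
  shows "\<exists>l \<delta>. \<delta> > 0 \<and> (\<forall>s'\<in>Sol. norm (s' l - s l) < \<delta> \<longrightarrow> s' \<in> T)"
proof -
  have "openin (product_topology (\<lambda>i. euclidean) UNIV) T"
    using T(1) by (simp add: euclidean_product_topology)
  from product_topology_open_contains_basis[OF this T(2)]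
  obtain X where X: "s \<in> Pi\<^sub>E UNIV X" "\<And>i. open (X i)" "finite {i. X i \<noteq> UNIV}" "Pi\<^sub>E UNIV X \<subseteq> T"
    by auto
  define I where "I = {i. X i \<noteq> UNIV}"
  have "\<exists>e>0. ball (s i) e \<subseteq> X i" for i
  proof -
    have "s i \<in> X i" using X(1) by (auto simp: PiE_iff)
    then show ?thesis using X(2) open_contains_ball by blast
  qed
  then obtain e where e: "\<And>i. e i > 0" "\<And>i. ball (s i) (e i) \<subseteq> X i" by metis
  define l where "l = Max (insert 0 I)"
  define m where "m = Min (insert 1 (e ` I))"
  have m: "m > 0" unfolding m_def using X(3) e(1) by (subst Min_gr_iff) (auto simp: I_def)
  have m_le: "m \<le> e i" if "i \<in> I" for i unfolding m_def using X(3) that by (intro Min_le) (auto simp: I_def)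
  have le_l: "i \<le> l" if "i \<in> I" for i unfolding l_def using X(3) that by (intro Max_ge) (auto simp: I_def)
  show ?thesis
  proof (intro exI[of _ l] exI[of _ "m / real (deg 0 l)"] conjI ballI impI)
    show "m / real (deg 0 l) > 0" using m deg_pos[of 0 l] by simp
    fix s' assume s': "s' \<in> Sol" "norm (s' l - s l) < m / real (deg 0 l)"
    have "s' i \<in> X i" if "i \<in> I" for i
    proof -
      have il: "i \<le> l" using le_l[OF that] .
      have "norm (s' i - s i) = norm (s' l ^ deg i l - s l ^ deg i l)"
        using Sol_pow[OF s'(1) il] Sol_pow[OF s il] by simp
      also have "\<dots> \<le> real (deg i l) * norm (s' l - s l)"
        by (rule norm_power_diff) (simp_all add: Sol_norm[OF s'(1)] Sol_norm[OF s])
      also have "\<dots> \<le> real (deg 0 l) * norm (s' l - s l)"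
      proof (intro mult_right_mono)
        have "deg i l \<le> deg 0 l"
          using deg_trans[OF le0 il] deg_pos[of 0 l] by (metis dvd_imp_le dvd_triv_right)
        then show "real (deg i l) \<le> real (deg 0 l)" by simp
      qed simp
      also have "\<dots> < m"
        using s'(2) deg_pos[of 0 l] by (simp add: field_simps)
      finally have "s' i \<in> ball (s i) (e i)"
        using m_le[OF that] by (simp add: dist_norm norm_minus_commute)
      then show ?thesis using e(2) by blast
    qed
    then have "s' \<in> Pi\<^sub>E UNIV X" by (auto simp: PiE_UNIV_domain I_def)
    then show "s' \<in> T" using X(4) by blast
  qed
qed

lemma product_nbhd_level:
  fixes t :: real
  assumes "open U" "(t, s) \<in> U" "s \<in> Sol"
  shows "\<exists>d>0. \<exists>l. \<exists>e>0. \<forall>t' s'. \<bar>t' - t\<bar> < d \<longrightarrow> s' \<in> Sol \<longrightarrow> norm (s' l - s l) < e \<longrightarrow> (t', s') \<in> U"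
proof -
  obtain A B where "open A" "open B" "(t, s) \<in> A \<times> B" "A \<times> B \<subseteq> U"
    using open_prod_elim[OF assms(1,2)] .
  then have AB: "open A" "open B" "t \<in> A" "s \<in> B" "A \<times> B \<subseteq> U" by auto
  obtain d where d: "d > 0" "ball t d \<subseteq> A" using AB(1,3) open_contains_ball_eq by blast
  obtain l e where e: "e > 0" "\<forall>s'\<in>Sol. norm (s' l - s l) < e \<longrightarrow> s' \<in> B"
    using Sol_nbhd_level[OF AB(2,4) assms(3)] by blast
  have "(t', s') \<in> U" if "\<bar>t' - t\<bar> < d" "s' \<in> Sol" "norm (s' l - s l) < e" for t' s'
  proof -
    have "t' \<in> ball t d" using that(1) by (simp add: dist_real_def)
    then have "t' \<in> A" using d(2) by blast
    moreover have "s' \<in> B" using that(2,3) e(2) by blast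
    ultimately show ?thesis using AB(5) by blast
  qed
  then show ?thesis
    by (intro exI[of _ d] conjI[OF d(1)] exI[of _ l] exI[of _ e] conjI[OF e(1)]) blast
qed

lemma open_level_slab:
  "open {p :: real \<times> (nat \<Rightarrow> complex). \<bar>fst p - t\<bar> < d \<and> norm (snd p l - z) < e}"
  by (intro open_Collect_conj open_Collect_less continuous_intros continuous_on_product_then_coordinatewise)

definition cylinder :: "nat \<Rightarrow> (real \<times> complex) set \<Rightarrow> (real \<times> (nat \<Rightarrow> complex)) set" where
  "cylinder j W = {x \<in> {0..1} \<times> Sol. (fst x, snd x j) \<in> W}"

lemma cylinder_subset: "cylinder j W \<subseteq> {0..1} \<times> Sol"
  by (auto simp: cylinder_def)

lemma cylinder_Sol: "y \<in> cylinder j W \<Longrightarrow> snd y \<in> Sol"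
  by (auto simp: cylinder_def)

lemma slabs_eq_cylinder:
  assumes "\<And>x. x \<in> F \<Longrightarrow> l x \<le> j"
  shows "({0..1} \<times> Sol) \<inter> (\<Union>x\<in>F. {p. \<bar>fst p - t x\<bar> < d x \<and> norm (snd p (l x) - z x) < e x}) =
    cylinder j (\<Union>x\<in>F. {q. \<bar>fst q - t x\<bar> < d x \<and> norm (snd q ^ deg (l x) j - z x) < e x})"
  using Sol_pow assms by (auto simp: cylinder_def)

lemma compact_subset_cylinder:
  assumes M: "compact M" "M \<subseteq> {0..1} \<times> Sol"
    and U: "openin (top_of_set ({0..1} \<times> Sol)) U" "M \<subseteq> U"
  shows "\<exists>j W. open W \<and> M \<subseteq> cylinder j W \<and> cylinder j W \<subseteq> U"
proof -
  obtain U' where U': "open U'" "U = ({0..1} \<times> Sol) \<inter> U'" using U(1) openin_open by blast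
  have "\<forall>x\<in>M. \<exists>d>0. \<exists>l. \<exists>e>0. \<forall>t' s'. \<bar>t' - fst x\<bar> < d \<longrightarrow> s' \<in> Sol \<longrightarrow>
      norm (s' l - snd x l) < e \<longrightarrow> (t', s') \<in> U'"
  proof
    fix x assume "x \<in> M"
    then have "(fst x, snd x) \<in> U'" "snd x \<in> Sol" using U U' M(2) by auto
    then show "\<exists>d>0. \<exists>l. \<exists>e>0. \<forall>t' s'. \<bar>t' - fst x\<bar> < d \<longrightarrow> s' \<in> Sol \<longrightarrow>
      norm (s' l - snd x l) < e \<longrightarrow> (t', s') \<in> U'"
      using product_nbhd_level[OF U'(1)] by blast
  qed
  then obtain d where "\<forall>x\<in>M. d x > 0 \<and> (\<exists>l. \<exists>e>0. \<forall>t' s'. \<bar>t' - fst x\<bar> < d x \<longrightarrow> s' \<in> Sol \<longrightarrow>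
      norm (s' l - snd x l) < e \<longrightarrow> (t', s') \<in> U')"
    by (rule bchoice[THEN exE])
  then obtain l where "\<forall>x\<in>M. d x > 0 \<and> (\<exists>e>0. \<forall>t' s'. \<bar>t' - fst x\<bar> < d x \<longrightarrow> s' \<in> Sol \<longrightarrow>
      norm (s' (l x) - snd x (l x)) < e \<longrightarrow> (t', s') \<in> U')"
    by (metis (no_types, lifting) bchoice[THEN exE])
  then obtain e where H: "\<And>x. x \<in> M \<Longrightarrow> d x > 0 \<and> e x > 0 \<and> (\<forall>t' s'. \<bar>t' - fst x\<bar> < d x \<longrightarrow>
      s' \<in> Sol \<longrightarrow> norm (s' (l x) - snd x (l x)) < e x \<longrightarrow> (t', s') \<in> U')"
    by (metis (no_types, lifting) bchoice[THEN exE])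
  define slab where "slab x = {p :: real \<times> (nat \<Rightarrow> complex). \<bar>fst p - fst x\<bar> < d x \<and> norm (snd p (l x) - snd x (l x)) < e x}" for x
  have "open (slab x)" for x unfolding slab_def by (rule open_level_slab)
  moreover have "M \<subseteq> (\<Union>x\<in>M. slab x)" using H by (force simp: slab_def)
  ultimately obtain F where F: "F \<subseteq> M" "finite F" "M \<subseteq> (\<Union>x\<in>F. slab x)"
    using compactE_image[OF M(1)] by metis
  have slab_U: "({0..1} \<times> Sol) \<inter> slab x \<subseteq> U'" if "x \<in> M" for x
  proof
    fix p assume "p \<in> ({0..1} \<times> Sol) \<inter> slab x"
    then have "\<bar>fst p - fst x\<bar> < d x" "snd p \<in> Sol" "norm (snd p (l x) - snd x (l x)) < e x"
      by (auto simp: slab_def)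
    then have "(fst p, snd p) \<in> U'" using H[OF that] by blast
    then show "p \<in> U'" by simp
  qed
  define j where "j = Max (insert 0 (l ` F))"
  have lj: "l x \<le> j" if "x \<in> F" for x unfolding j_def using F(2) that by (intro Max_ge) auto
  define W where "W = (\<Union>x\<in>F. {q. \<bar>fst q - fst x\<bar> < d x \<and> norm (snd q ^ deg (l x) j - snd x (l x)) < e x})"
  have W: "({0..1} \<times> Sol) \<inter> (\<Union>x\<in>F. slab x) = cylinder j W"
    unfolding W_def slab_def by (rule slabs_eq_cylinder[of F l j fst d "\<lambda>x. snd x (l x)" e]) (rule lj)
  have "open W"
    unfolding W_def by (intro open_UN ballI open_Collect_conj open_Collect_less continuous_intros)
  moreover have "M \<subseteq> cylinder j W" using F(3) M(2) W by blast
  moreover have "cylinder j W \<subseteq> U" using slab_U F(1) U'(2) W by blast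
  ultimately show ?thesis by blast
qed

end

section \<open>Lifting a cylinder along an arc component\<close>

locale cylinder_continuum = solenoid_seq +
  fixes M :: "(real \<times> (nat \<Rightarrow> complex)) set" and j :: nat and W :: "(real \<times> complex) set"
    and t0 :: real and s0 :: "nat \<Rightarrow> complex"
  assumes M_compact: "compact M" and M_connected: "connected M"
    and M_cylinder: "M \<subseteq> cylinder j W" and M_proj: "snd ` M = Sol"
    and W_open: "open W" and base_in_M: "(t0, s0) \<in> M"
begin

text \<open>\<open>Wlift\<close> is the part of the cylinder over the arc component of \<open>s0\<close>, pulled back along
  \<open>r \<mapsto> flow r s0\<close>.\<close>
definition Wlift :: "(real \<times> real) set" where
  "Wlift = {p. fst p \<in> {0..1} \<and> (fst p, flow (snd p) s0 j) \<in> W}"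

definition Alift :: "(real \<times> real) set" where
  "Alift = path_component_set Wlift (t0, 0)"

definition cover :: "real \<times> real \<Rightarrow> real \<times> (nat \<Rightarrow> complex)" where
  "cover p = (fst p, flow (snd p) s0)"

definition A :: "(real \<times> (nat \<Rightarrow> complex)) set" where
  "A = cover ` Alift"

text \<open>Translation by \<open>deg 0 j\<close> leaves \<open>Wlift\<close> invariant; \<open>Per\<close> records the translations
  that also preserve its component \<open>Alift\<close>.\<close>
definition Per :: "int set" where
  "Per = {k. (t0, real (deg 0 j) * of_int k) \<in> Alift}"

definition Agree :: "nat \<Rightarrow> (real \<times> (nat \<Rightarrow> complex)) set" where
  "Agree l = {y \<in> cylinder j W. \<exists>a\<in>A. fst a = fst y \<and> snd a l = snd y l}"

lemma base_point: "t0 \<in> {0..1}" "s0 \<in> Sol" "(t0, s0 j) \<in> W"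
  using base_in_M M_cylinder by (auto simp: cylinder_def)

lemma Alift_subset_Wlift: "Alift \<subseteq> Wlift"
  unfolding Alift_def by (auto intro: path_component_mem(2))

lemma base_in_Alift: "(t0, 0) \<in> Alift"
  using base_point unfolding Alift_def by (simp add: path_component_refl Wlift_def)

lemma cover_in_cylinder: "p \<in> Wlift \<Longrightarrow> cover p \<in> cylinder j W"
  using flow_in_Sol[OF base_point(2)] by (auto simp: cover_def Wlift_def cylinder_def)

lemma A_subset_cylinder: "A \<subseteq> cylinder j W"
  using cover_in_cylinder Alift_subset_Wlift by (auto simp: A_def)

lemma base_in_A: "(t0, s0) \<in> A"
  using base_in_Alift unfolding A_def cover_def by (force intro: image_eqI[of _ _ "(t0, 0)"])

lemma A_cases:
  assumes "a \<in> A" obtains r where "(fst a, r) \<in> Alift" "snd a = flow r s0"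
  using assms unfolding A_def cover_def by auto

lemma A_subset_Agree: "A \<subseteq> Agree l"
  using A_subset_cylinder by (auto simp: Agree_def)

lemma Agree_subset_cylinder: "Agree l \<subseteq> cylinder j W"
  by (auto simp: Agree_def)

lemma continuous_on_cover: "continuous_on UNIV cover"
proof -
  have "continuous_on UNIV ((\<lambda>q. flow (fst q) (snd q)) \<circ> (\<lambda>p :: real \<times> real. (snd p, s0)))"
    by (rule continuous_on_compose[OF _ continuous_on_subset[OF continuous_on_flow]])
      (simp_all add: continuous_intros)
  then have "continuous_on UNIV (\<lambda>p :: real \<times> real. flow (snd p) s0)"
    by (simp add: o_def)
  then show ?thesis
    unfolding cover_def[abs_def] by (rule continuous_on_Pair[OF continuous_on_fst[OF continuous_on_id]])
qed

lemma connected_A: "connected A"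
proof -
  have "path_connected A"
    unfolding A_def Alift_def
    by (rule path_connected_continuous_image[OF continuous_on_subset[OF continuous_on_cover]]) simp_all
  then show ?thesis by (rule path_connected_imp_connected)
qed

lemma Wlift_translate: "p \<in> Wlift \<Longrightarrow> p + (0, real (deg 0 j) * of_int k) \<in> Wlift"
  using flow_period[of j j "snd p" k s0] by (simp add: Wlift_def)

lemma path_component_Wlift_translate:
  assumes "path_component Wlift p q"
  shows "path_component Wlift (p + (0, real (deg 0 j) * of_int k)) (q + (0, real (deg 0 j) * of_int k))"
proof -
  obtain g where g: "path g" "path_image g \<subseteq> Wlift" "pathstart g = p" "pathfinish g = q"
    using assms unfolding path_component_def by blast
  define h where "h u = g u + (0, real (deg 0 j) * of_int k)" for u
  have "path h" using g(1) unfolding h_def path_def by (intro continuous_intros)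
  moreover have "path_image h \<subseteq> Wlift"
  proof
    fix z assume "z \<in> path_image h"
    then obtain u where u: "u \<in> {0..1}" "z = h u" by (auto simp: path_image_def)
    then have "g u \<in> Wlift" using g(2) by (auto simp: path_image_def)
    then show "z \<in> Wlift" using u(2) Wlift_translate unfolding h_def by blast
  qed
  ultimately show ?thesis
    using g(3,4) unfolding path_component_def h_def pathstart_def pathfinish_def by blast
qed

lemma Alift_translate:
  assumes "(t, r) \<in> Alift" "k \<in> Per" shows "(t, r + real (deg 0 j) * of_int k) \<in> Alift"
proof -
  have "path_component Wlift (t0, real (deg 0 j) * of_int k) (t, r + real (deg 0 j) * of_int k)"
    using path_component_Wlift_translate[of "(t0, 0)" "(t, r)" k] assms(1) by (simp add: Alift_def)
  moreover have "path_component Wlift (t0, 0) (t0, real (deg 0 j) * of_int k)"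
    using assms(2) by (simp add: Per_def Alift_def)
  ultimately show ?thesis unfolding Alift_def using path_component_trans by (metis mem_Collect_eq)
qed

lemma Per_if_translate:
  assumes "(t, r) \<in> Alift" "(t, r + real (deg 0 j) * of_int k) \<in> Alift" shows "k \<in> Per"
proof -
  have "path_component Wlift (t, r + real (deg 0 j) * of_int k) (t0, real (deg 0 j) * of_int k)"
    using path_component_Wlift_translate[of "(t, r)" "(t0, 0)" k] assms(1)
    by (simp add: Alift_def path_component_sym)
  then show ?thesis
    using assms(2) unfolding Per_def Alift_def by (metis mem_Collect_eq path_component_trans)
qed

lemma Per_zero: "0 \<in> Per"
  using base_in_Alift by (simp add: Per_def)

lemma Per_add: "k \<in> Per \<Longrightarrow> k' \<in> Per \<Longrightarrow> k + k' \<in> Per"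
  using Alift_translate[of t0 "real (deg 0 j) * of_int k" k'] by (simp add: Per_def distrib_left)

lemma Per_uminus: "k \<in> Per \<Longrightarrow> - k \<in> Per"
  using Per_if_translate[of t0 "real (deg 0 j) * of_int k" "- k"] base_in_Alift
  by (simp add: Per_def)

lemma Per_mult: assumes "k \<in> Per" shows "u * k \<in> Per"
proof -
  have nat_mult: "int m * k \<in> Per" for m
    by (induction m) (simp_all add: Per_zero distrib_right Per_add assms)
  show ?thesis
  proof (cases "u \<ge> 0")
    case True
    then show ?thesis using nat_mult[of "nat u"] by simp
  next
    case False
    then have "- (int (nat (- u)) * k) \<in> Per" using Per_uminus nat_mult by blast
    then show ?thesis using False by simp
  qed
qed

lemma linepath_in_Wlift:
  assumes "t \<in> {0..1}" "t' \<in> {0..1}"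
    and W: "\<And>v. v \<in> {0..1} \<Longrightarrow>
      ((1 - v) * t + v * t', flow r s0 j * cis (v * (2 * pi * b / real (deg 0 j)))) \<in> W"
  shows "path_component Wlift (t, r) (t', r + b)"
proof (rule path_component_linepath, rule subsetI)
  fix p assume "p \<in> closed_segment (t, r) (t', r + b)"
  then obtain v where v: "v \<in> {0..1}" "p = ((1 - v) * t + v * t', r + v * b)"
    by (auto simp: in_segment algebra_simps)
  have "(1 - v) * t + v * t' \<in> closed_segment t t'"
    using v(1) by (auto simp: in_segment algebra_simps)
  then have "(1 - v) * t + v * t' \<in> {0..1}"
    using assms(1,2) closed_segment_subset[of t "{0..1}" t'] by auto
  moreover have "flow (r + v * b) s0 j = flow r s0 j * cis (v * (2 * pi * b / real (deg 0 j)))"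
    by (simp add: flow_shift mult.left_commute)
  ultimately show "p \<in> Wlift" using W[OF v(1)] v(2) by (simp add: Wlift_def)
qed

lemma path_component_Wlift_near:
  assumes "t \<in> {0..1}" "t' \<in> {0..1}" "\<bar>t' - t\<bar> < \<epsilon>" "\<bar>2 * pi * b / real (deg 0 j)\<bar> < \<eta>"
    and W: "\<And>t'' x. \<bar>t'' - t\<bar> < \<epsilon> \<Longrightarrow> \<bar>x\<bar> < \<eta> \<Longrightarrow> (t'', flow r s0 j * cis x) \<in> W"
  shows "path_component Wlift (t, r) (t', r + b)"
proof (rule linepath_in_Wlift[OF assms(1,2)])
  fix v :: real assume v: "v \<in> {0..1}"
  have "(1 - v) * t + v * t' - t = v * (t' - t)" by (simp add: algebra_simps)
  then have "\<bar>(1 - v) * t + v * t' - t\<bar> \<le> \<bar>t' - t\<bar>"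
    using abs_mult_le_unit_interval[OF v] by simp
  moreover have "\<bar>v * (2 * pi * b / real (deg 0 j))\<bar> \<le> \<bar>2 * pi * b / real (deg 0 j)\<bar>"
    by (rule abs_mult_le_unit_interval[OF v])
  ultimately show "((1 - v) * t + v * t', flow r s0 j * cis (v * (2 * pi * b / real (deg 0 j)))) \<in> W"
    using W assms(3,4) by simp
qed

lemma local_lift:
  assumes y: "y \<in> cylinder j W" and l: "j \<le> l" and \<zeta>: "\<zeta> > 0"
  shows "\<exists>\<epsilon>>0. \<exists>\<delta>>0. \<forall>t' s'. t' \<in> {0..1} \<longrightarrow> \<bar>t' - fst y\<bar> < \<epsilon> \<longrightarrow> s' \<in> Sol \<longrightarrow>
    norm (s' l - snd y l) < \<delta> \<longrightarrow>
    (\<exists>\<theta>. \<bar>\<theta>\<bar> < \<zeta> \<and> s' l = snd y l * cis (2 * pi * \<theta>) \<and> (t', s' j) \<in> W \<and>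
      (\<forall>r. flow r s0 j = snd y j \<longrightarrow> path_component Wlift (fst y, r) (t', r + real (deg 0 l) * \<theta>)))"
proof -
  obtain t s where ts: "y = (t, s)" by (cases y)
  have t: "t \<in> {0..1}" "s \<in> Sol" "(t, s j) \<in> W" using y ts by (auto simp: cylinder_def)
  obtain \<epsilon> \<eta> where rot: "\<epsilon> > 0" "\<eta> > 0"
    "\<And>t'' x. \<bar>t'' - t\<bar> < \<epsilon> \<Longrightarrow> \<bar>x\<bar> < \<eta> \<Longrightarrow> (t'', s j * cis x) \<in> W"
    using rotation_nbhd[OF W_open t(3) Sol_norm[OF t(2)]] by blast
  define P where "P = real (deg j l)"
  have P: "P \<ge> 1" using deg_pos[of j l] by (simp add: P_def)
  have "min \<zeta> (\<eta> / (2 * pi * P)) > 0" using \<zeta> rot(2) P by simp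
  then obtain \<delta> where \<delta>: "\<delta> > 0" "\<forall>s'\<in>Sol. norm (s' l - s l) < \<delta> \<longrightarrow>
      (\<exists>\<theta>. \<bar>\<theta>\<bar> < min \<zeta> (\<eta> / (2 * pi * P)) \<and> s' l = s l * cis (2 * pi * \<theta>))"
    using Sol_near_level_rotation[OF t(2)] by blast
  show ?thesis
  proof (rule exI[of _ \<epsilon>], rule conjI[OF rot(1)], rule exI[of _ \<delta>], rule conjI[OF \<delta>(1)], intro allI impI)
    fix t' s' assume h: "t' \<in> {0..1}" "\<bar>t' - fst y\<bar> < \<epsilon>" "s' \<in> Sol" "norm (s' l - snd y l) < \<delta>"
    obtain \<theta> where \<theta>: "\<bar>\<theta>\<bar> < \<zeta>" "\<bar>\<theta>\<bar> < \<eta> / (2 * pi * P)" "s' l = s l * cis (2 * pi * \<theta>)"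
      using \<delta>(2) h(3,4) ts by auto
    have small: "\<bar>P * (2 * pi * \<theta>)\<bar> < \<eta>"
      using \<theta>(2) P by (simp add: abs_mult field_simps)
    have "s' j = s j * cis (P * (2 * pi * \<theta>))"
      unfolding P_def by (rule Sol_rotation_below[OF t(2) h(3) \<theta>(3) l])
    then have "(t', s' j) \<in> W" using rot(3) small h(2) ts by simp
    moreover have "path_component Wlift (t, r) (t', r + real (deg 0 l) * \<theta>)"
      if "flow r s0 j = s j" for r
    proof (rule path_component_Wlift_near[OF t(1) h(1)])
      show "\<bar>t' - t\<bar> < \<epsilon>" using h(2) ts by simp
      have "2 * pi * (real (deg 0 l) * \<theta>) / real (deg 0 j) = P * (2 * pi * \<theta>)"
        using deg_trans[OF le0 l] deg_pos[of 0 j] by (simp add: P_def field_simps)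
      then show "\<bar>2 * pi * (real (deg 0 l) * \<theta>) / real (deg 0 j)\<bar> < \<eta>" using small by simp
    qed (use rot(3) that in simp)
    ultimately show "\<exists>\<theta>. \<bar>\<theta>\<bar> < \<zeta> \<and> s' l = snd y l * cis (2 * pi * \<theta>) \<and> (t', s' j) \<in> W \<and>
      (\<forall>r. flow r s0 j = snd y j \<longrightarrow> path_component Wlift (fst y, r) (t', r + real (deg 0 l) * \<theta>))"
      using \<theta>(1,3) ts by auto
  qed
qed

lemma Agree_transfer:
  assumes y: "y \<in> cylinder j W" and y': "(t', s') \<in> cylinder j W" and l: "j \<le> l"
    and \<theta>: "s' l = snd y l * cis (2 * pi * \<theta>)"
    and path: "\<And>r. flow r s0 j = snd y j \<Longrightarrow> path_component Wlift (fst y, r) (t', r + real (deg 0 l) * \<theta>)"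
  shows "y \<in> Agree l \<longleftrightarrow> (t', s') \<in> Agree l"
proof -
  have lift_iff: "(fst y, r) \<in> Alift \<longleftrightarrow> (t', r + real (deg 0 l) * \<theta>) \<in> Alift"
    if "flow r s0 l = snd y l" for r
  proof -
    have "flow r s0 j = snd y j"
      using Sol_eq_below[OF flow_in_Sol[OF base_point(2)] cylinder_Sol[OF y] that l] .
    then have "path_component Wlift (fst y, r) (t', r + real (deg 0 l) * \<theta>)" by (rule path)
    then show ?thesis
      unfolding Alift_def by (metis mem_Collect_eq path_component_sym path_component_trans)
  qed
  show ?thesis
  proof
    assume "y \<in> Agree l"
    then obtain a where a: "a \<in> A" "fst a = fst y" "snd a l = snd y l" by (auto simp: Agree_def)
    obtain r where r: "(fst y, r) \<in> Alift" "snd a = flow r s0" using A_cases[OF a(1)] a(2) by metis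
    have "cover (t', r + real (deg 0 l) * \<theta>) \<in> A"
      using lift_iff r a(3) by (simp add: A_def)
    moreover have "flow (r + real (deg 0 l) * \<theta>) s0 l = s' l"
      using flow_shift_level a(3) r(2) \<theta> by simp
    ultimately show "(t', s') \<in> Agree l"
      unfolding Agree_def using y' by (auto intro!: bexI[of _ "cover (t', r + real (deg 0 l) * \<theta>)"] simp: cover_def)
  next
    assume "(t', s') \<in> Agree l"
    then obtain a where a: "a \<in> A" "fst a = t'" "snd a l = s' l" by (auto simp: Agree_def)
    obtain r' where r': "(t', r') \<in> Alift" "snd a = flow r' s0" using A_cases[OF a(1)] a(2) by metis
    define r where "r = r' - real (deg 0 l) * \<theta>"
    have "flow r s0 l * cis (2 * pi * \<theta>) = snd y l * cis (2 * pi * \<theta>)"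
      using flow_shift_level[of r l \<theta>] a(3) r'(2) \<theta> by (simp add: r_def)
    then have r_l: "flow r s0 l = snd y l" by simp
    then have "(fst y, r) \<in> Alift" using lift_iff r'(1) by (simp add: r_def)
    then have "cover (fst y, r) \<in> A" by (simp add: A_def)
    then show "y \<in> Agree l"
      unfolding Agree_def using y r_l by (auto intro!: bexI[of _ "cover (fst y, r)"] simp: cover_def)
  qed
qed

lemma Agree_locally_constant:
  assumes y: "y \<in> cylinder j W" and l: "j \<le> l"
  shows "\<exists>N. open N \<and> y \<in> N \<and>
    (\<forall>y' \<in> N \<inter> ({0..1} \<times> Sol). y' \<in> cylinder j W \<and> (y \<in> Agree l \<longleftrightarrow> y' \<in> Agree l))"
proof -
  obtain \<epsilon> \<delta> where \<epsilon>\<delta>: "\<epsilon> > 0" "\<delta> > 0"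
    "\<forall>t' s'. t' \<in> {0..1} \<longrightarrow> \<bar>t' - fst y\<bar> < \<epsilon> \<longrightarrow> s' \<in> Sol \<longrightarrow> norm (s' l - snd y l) < \<delta> \<longrightarrow>
      (\<exists>\<theta>. \<bar>\<theta>\<bar> < 1 \<and> s' l = snd y l * cis (2 * pi * \<theta>) \<and> (t', s' j) \<in> W \<and>
        (\<forall>r. flow r s0 j = snd y j \<longrightarrow> path_component Wlift (fst y, r) (t', r + real (deg 0 l) * \<theta>)))"
    using local_lift[OF y l, of 1] by auto
  define N where "N = {p :: real \<times> (nat \<Rightarrow> complex). \<bar>fst p - fst y\<bar> < \<epsilon> \<and> norm (snd p l - snd y l) < \<delta>}"
  have near: "(t', s') \<in> cylinder j W \<and> (y \<in> Agree l \<longleftrightarrow> (t', s') \<in> Agree l)"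
    if "(t', s') \<in> N \<inter> ({0..1} \<times> Sol)" for t' s'
  proof -
    have "t' \<in> {0..1}" "\<bar>t' - fst y\<bar> < \<epsilon>" "s' \<in> Sol" "norm (s' l - snd y l) < \<delta>"
      using that by (auto simp: N_def)
    then obtain \<theta> where \<theta>: "s' l = snd y l * cis (2 * pi * \<theta>)" "(t', s' j) \<in> W"
      "\<And>r. flow r s0 j = snd y j \<Longrightarrow> path_component Wlift (fst y, r) (t', r + real (deg 0 l) * \<theta>)"
      using \<epsilon>\<delta>(3) by blast
    have y': "(t', s') \<in> cylinder j W" using \<theta>(2) that by (simp add: cylinder_def)
    show ?thesis using y' Agree_transfer[OF y y' l \<theta>(1) \<theta>(3)] by blast
  qed
  have "\<forall>y' \<in> N \<inter> ({0..1} \<times> Sol). y' \<in> cylinder j W \<and> (y \<in> Agree l \<longleftrightarrow> y' \<in> Agree l)"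
    using near by (metis prod.collapse)
  moreover have "open N" unfolding N_def by (rule open_level_slab)
  moreover have "y \<in> N" using \<epsilon>\<delta>(1,2) by (simp add: N_def)
  ultimately show ?thesis by blast
qed

lemma openin_Agree:
  assumes "j \<le> l" shows "openin (top_of_set ({0..1} \<times> Sol)) (Agree l)"
proof (subst openin_subopen, intro ballI)
  fix y assume y: "y \<in> Agree l"
  then have "y \<in> cylinder j W" using Agree_subset_cylinder by blast
  then obtain N where N: "open N" "y \<in> N"
    "\<forall>y' \<in> N \<inter> ({0..1} \<times> Sol). y' \<in> cylinder j W \<and> (y \<in> Agree l \<longleftrightarrow> y' \<in> Agree l)"
    using Agree_locally_constant[OF _ assms] by blast
  have "y \<in> ({0..1} \<times> Sol) \<inter> N" using \<open>y \<in> cylinder j W\<close> cylinder_subset N(2) by blast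
  moreover have "({0..1} \<times> Sol) \<inter> N \<subseteq> Agree l" using N(3) y by blast
  ultimately show "\<exists>T. openin (top_of_set ({0..1} \<times> Sol)) T \<and> y \<in> T \<and> T \<subseteq> Agree l"
    using openin_open_Int[OF N(1)] by blast
qed

lemma openin_cylinder_diff_Agree:
  assumes "j \<le> l" shows "openin (top_of_set ({0..1} \<times> Sol)) (cylinder j W - Agree l)"
proof (subst openin_subopen, intro ballI)
  fix y assume y: "y \<in> cylinder j W - Agree l"
  then obtain N where N: "open N" "y \<in> N"
    "\<forall>y' \<in> N \<inter> ({0..1} \<times> Sol). y' \<in> cylinder j W \<and> (y \<in> Agree l \<longleftrightarrow> y' \<in> Agree l)"
    using Agree_locally_constant[OF _ assms] by blast
  have "y \<in> ({0..1} \<times> Sol) \<inter> N" using y cylinder_subset N(2) by blast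
  moreover have "({0..1} \<times> Sol) \<inter> N \<subseteq> cylinder j W - Agree l" using N(3) y by blast
  ultimately show "\<exists>T. openin (top_of_set ({0..1} \<times> Sol)) T \<and> y \<in> T \<and> T \<subseteq> cylinder j W - Agree l"
    using openin_open_Int[OF N(1)] by blast
qed

lemma M_subset_Agree:
  assumes "j \<le> l" shows "M \<subseteq> Agree l"
proof -
  obtain N1 where N1: "open N1" "Agree l = ({0..1} \<times> Sol) \<inter> N1"
    using openin_Agree[OF assms] openin_open by metis
  obtain N2 where N2: "open N2" "cylinder j W - Agree l = ({0..1} \<times> Sol) \<inter> N2"
    using openin_cylinder_diff_Agree[OF assms] openin_open by metis
  have MX: "M \<subseteq> {0..1} \<times> Sol" using M_cylinder cylinder_subset by blast
  have "M \<subseteq> N1 \<union> N2" using M_cylinder MX N1(2) N2(2) by blast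
  moreover have "N1 \<inter> N2 \<inter> M = {}" using MX N1(2) N2(2) by blast
  moreover have "(t0, s0) \<in> N1 \<inter> M" using base_in_M base_in_A A_subset_Agree N1(2) by blast
  ultimately have "N2 \<inter> M = {}"
    using connectedD[OF M_connected N1(1) N2(1)] by blast
  then show ?thesis using \<open>M \<subseteq> N1 \<union> N2\<close> MX N1(2) by blast
qed

section \<open>Nontrivial periods\<close>

lemma cover_inj_at_level:
  assumes Per: "Per = {0}" and a: "a \<in> A" "a' \<in> A" "fst a = fst a'" "snd a j = snd a' j"
  shows "a = a'"
proof -
  obtain r where r: "(fst a, r) \<in> Alift" "snd a = flow r s0" using A_cases[OF a(1)] by metis
  obtain r' where r': "(fst a, r') \<in> Alift" "snd a' = flow r' s0" using A_cases[OF a(2)] a(3) by metis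
  obtain k :: int where k: "r = r' + real (deg 0 j) * of_int k"
    using flow_eq_at_level[OF base_point(2), of r j r'] a(4) r(2) r'(2) by auto
  then have "k \<in> Per" using Per_if_translate[OF r'(1)] r(1) by simp
  then have "r = r'" using Per k by simp
  then show ?thesis using a(3) r(2) r'(2) by (simp add: prod_eq_iff)
qed

lemma M_subset_A:
  assumes Per: "Per = {0}" shows "M \<subseteq> A"
proof
  fix y assume y: "y \<in> M"
  have sy: "snd y \<in> Sol" using y M_cylinder cylinder_Sol by blast
  obtain a where a: "a \<in> A" "fst a = fst y" "snd a j = snd y j"
    using M_subset_Agree[of j] y by (auto simp: Agree_def)
  have "snd a l = snd y l" if jl: "j \<le> l" for l
  proof -
    obtain b where b: "b \<in> A" "fst b = fst y" "snd b l = snd y l"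
      using M_subset_Agree[OF jl] y by (auto simp: Agree_def)
    have "snd b j = snd y j"
      using Sol_eq_below[OF A_subset_cylinder[THEN subsetD, THEN cylinder_Sol, OF b(1)] sy b(3) jl] .
    then have "b = a" using cover_inj_at_level[OF Per b(1) a(1)] a(2,3) b(2) by simp
    then show ?thesis using b(3) by simp
  qed
  then have "snd a = snd y"
    using Sol_eqI[OF A_subset_cylinder[THEN subsetD, THEN cylinder_Sol, OF a(1)] sy] by blast
  then show "y \<in> A" using a(1,2) by (metis prod.collapse)
qed

lemma lift_locally_close:
  assumes Per: "Per = {0}" and t\<rho>: "(t, \<rho>) \<in> Alift"
  shows "\<exists>N. open N \<and> cover (t, \<rho>) \<in> N \<and>
    (\<forall>p\<in>Alift. cover p \<in> N \<longrightarrow> \<bar>snd p - \<rho>\<bar> < real (deg 0 j) / 2)"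
proof -
  have y: "cover (t, \<rho>) \<in> cylinder j W"
    using t\<rho> Alift_subset_Wlift cover_in_cylinder by blast
  obtain \<epsilon> \<delta> where \<epsilon>\<delta>: "\<epsilon> > 0" "\<delta> > 0"
    "\<forall>t' s'. t' \<in> {0..1} \<longrightarrow> \<bar>t' - t\<bar> < \<epsilon> \<longrightarrow> s' \<in> Sol \<longrightarrow> norm (s' j - flow \<rho> s0 j) < \<delta> \<longrightarrow>
      (\<exists>\<theta>. \<bar>\<theta>\<bar> < 1/2 \<and> s' j = flow \<rho> s0 j * cis (2 * pi * \<theta>) \<and> (t', s' j) \<in> W \<and>
        (\<forall>r. flow r s0 j = flow \<rho> s0 j \<longrightarrow> path_component Wlift (t, r) (t', r + real (deg 0 j) * \<theta>)))"
    using local_lift[OF y order_refl, of "1/2"] by (auto simp: cover_def)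
  define N where "N = {p :: real \<times> (nat \<Rightarrow> complex). \<bar>fst p - t\<bar> < \<epsilon> \<and> norm (snd p j - flow \<rho> s0 j) < \<delta>}"
  have "\<bar>r - \<rho>\<bar> < real (deg 0 j) / 2" if p: "(t', r) \<in> Alift" "cover (t', r) \<in> N" for t' r
  proof -
    have "cover (t', r) \<in> cylinder j W" using p(1) Alift_subset_Wlift cover_in_cylinder by blast
    then have "t' \<in> {0..1}" "flow r s0 \<in> Sol" by (auto simp: cover_def cylinder_def)
    moreover have "\<bar>t' - t\<bar> < \<epsilon>" "norm (flow r s0 j - flow \<rho> s0 j) < \<delta>"
      using p(2) by (auto simp: N_def cover_def)
    ultimately obtain \<theta> where \<theta>: "\<bar>\<theta>\<bar> < 1/2" "flow r s0 j = flow \<rho> s0 j * cis (2 * pi * \<theta>)"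
      "\<forall>r'. flow r' s0 j = flow \<rho> s0 j \<longrightarrow> path_component Wlift (t, r') (t', r' + real (deg 0 j) * \<theta>)"
      using \<epsilon>\<delta>(3) by blast
    have "(t', \<rho> + real (deg 0 j) * \<theta>) \<in> Alift"
      using \<theta>(3)[rule_format, OF refl] t\<rho> unfolding Alift_def by (metis mem_Collect_eq path_component_trans)
    then have "cover (t', \<rho> + real (deg 0 j) * \<theta>) \<in> A" by (simp add: A_def)
    moreover have "cover (t', r) \<in> A" using p(1) by (simp add: A_def)
    ultimately have "cover (t', \<rho> + real (deg 0 j) * \<theta>) = cover (t', r)"
      by (rule cover_inj_at_level[OF Per]) (simp_all add: cover_def flow_shift_level \<theta>(2))
    then have "r = \<rho> + real (deg 0 j) * \<theta>"
      using flow_inj[OF base_point(2)] by (simp add: cover_def)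
    then show ?thesis using \<theta>(1) deg_pos[of 0 j] by (simp add: abs_mult)
  qed
  moreover have "open N" unfolding N_def by (rule open_level_slab)
  moreover have "cover (t, \<rho>) \<in> N" using \<epsilon>\<delta>(1,2) by (simp add: N_def cover_def)
  ultimately show ?thesis by auto
qed

lemma M_orbit_accumulates:
  "\<exists>f :: nat \<Rightarrow> real \<times> (nat \<Rightarrow> complex). \<exists>y. range f \<subseteq> M \<and>
    (\<forall>k. snd (f k) = flow (real (deg 0 j) * real k) s0) \<and>
    y \<in> M \<and> (\<forall>U. y \<in> U \<and> open U \<longrightarrow> infinite (U \<inter> range f))"
proof -
  have "\<exists>\<tau>. (\<tau>, flow (real (deg 0 j) * real k) s0) \<in> M" for k :: nat
  proof -
    have "flow (real (deg 0 j) * real k) s0 \<in> snd ` M"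
      using M_proj flow_in_Sol[OF base_point(2)] by simp
    then show ?thesis by (metis imageE prod.collapse)
  qed
  then obtain \<tau> where \<tau>: "\<And>k::nat. (\<tau> k, flow (real (deg 0 j) * real k) s0) \<in> M" by metis
  define f where "f k = (\<tau> k, flow (real (deg 0 j) * real k) s0)" for k
  have "inj f"
  proof (rule injI)
    fix k k' assume "f k = f k'"
    then have "flow (real (deg 0 j) * real k) s0 = flow (real (deg 0 j) * real k') s0"
      by (simp add: f_def)
    then have "real (deg 0 j) * real k = real (deg 0 j) * real k'"
      by (rule flow_inj[OF base_point(2)])
    then show "k = k'" using deg_pos[of 0 j] by simp
  qed
  have fM: "range f \<subseteq> M" using \<tau> by (auto simp: f_def)
  have "countable (range f)" by simp
  then obtain y where "y \<in> M" "\<forall>U. y \<in> U \<and> open U \<longrightarrow> infinite (U \<inter> range f)"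
    using countably_compact_imp_acc_point[OF compact_imp_countably_compact[OF M_compact] _
        range_inj_infinite[OF \<open>inj f\<close>] fM] by blast
  moreover have "snd (f k) = flow (real (deg 0 j) * real k) s0" for k by (simp add: f_def)
  ultimately show ?thesis using fM by blast
qed

text \<open>Otherwise \<open>M \<subseteq> A\<close>, and the points of \<open>M\<close> over \<open>flow (deg 0 j * k) s0\<close>, \<open>k \<in> \<nat>\<close>,
  would accumulate in \<open>A\<close> although their lifts are a full period apart.\<close>
lemma Per_nontrivial: "\<exists>k\<in>Per. k \<noteq> 0"
proof (rule ccontr)
  assume "\<not> (\<exists>k\<in>Per. k \<noteq> 0)"
  then have Per: "Per = {0}" using Per_zero by blast
  obtain f y where f: "range f \<subseteq> M" "\<And>k. snd (f k) = flow (real (deg 0 j) * real k) s0"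
    and y: "y \<in> M" "\<And>U. y \<in> U \<Longrightarrow> open U \<Longrightarrow> infinite (U \<inter> range f)"
    using M_orbit_accumulates by blast
  have "y \<in> A" using M_subset_A[OF Per] y(1) by blast
  then obtain \<rho> where \<rho>: "(fst y, \<rho>) \<in> Alift" "snd y = flow \<rho> s0" by (rule A_cases)
  have "cover (fst y, \<rho>) = y" using \<rho>(2) by (simp add: cover_def prod_eq_iff)
  then obtain N where N: "open N" "y \<in> N"
      "\<forall>p\<in>Alift. cover p \<in> N \<longrightarrow> \<bar>snd p - \<rho>\<bar> < real (deg 0 j) / 2"
    using lift_locally_close[OF Per \<rho>(1)] by auto
  define K where "K = {k. f k \<in> N}"
  have "N \<inter> range f \<subseteq> f ` K" by (auto simp: K_def)
  then have "infinite K" using y(2)[OF N(2,1)] finite_subset finite_imageI by blast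
  have close: "\<bar>real (deg 0 j) * real k - \<rho>\<bar> < real (deg 0 j) / 2" if "k \<in> K" for k
  proof -
    have "f k \<in> A" using M_subset_A[OF Per] f(1) by blast
    then obtain r where r: "(fst (f k), r) \<in> Alift" "snd (f k) = flow r s0" by (rule A_cases)
    have "r = real (deg 0 j) * real k"
      using r(2) f(2)[of k] flow_inj[OF base_point(2), of r] by simp
    moreover have "cover (fst (f k), r) = f k" using r(2) by (simp add: cover_def prod_eq_iff)
    ultimately show ?thesis using N(3)[rule_format, OF r(1)] that by (simp add: K_def)
  qed
  obtain k1 where k1: "k1 \<in> K" using \<open>infinite K\<close> by (metis ex_in_conv finite.emptyI)
  have "K \<subseteq> {k1}"
  proof
    fix k assume "k \<in> K"
    then have "k = k1" using nat_multiples_near_eq[OF _ close close[OF k1]] deg_pos[of 0 j] by simp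
    then show "k \<in> {k1}" by simp
  qed
  then show False using \<open>infinite K\<close> finite_subset by blast
qed

section \<open>An open connected neighbourhood\<close>

text \<open>The defect at level \<open>L\<close> is a root of unity, i.e. a translation by a multiple of
  \<open>deg 0 l0\<close>, which the Bezout identity splits into a period and a multiple of \<open>deg 0 L\<close>.\<close>
lemma Agree_approx:
  assumes k0: "k0 \<in> Per" and l0: "j \<le> l0" "l0 \<le> L"
    and bezout: "int (deg j l0) = u * k0 + v * int (deg j L)"
    and y: "y \<in> Agree l0"
  shows "\<exists>a\<in>A. fst a = fst y \<and> snd a L = snd y L"
proof -
  obtain a where a: "a \<in> A" "fst a = fst y" "snd a l0 = snd y l0" using y by (auto simp: Agree_def)
  obtain r where r: "(fst y, r) \<in> Alift" "snd a = flow r s0" using A_cases[OF a(1)] a(2) by metis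
  have sy: "snd y \<in> Sol" using y Agree_subset_cylinder cylinder_Sol by blast
  have sr: "flow r s0 \<in> Sol" by (rule flow_in_Sol[OF base_point(2)])
  have "snd y L ^ deg l0 L = flow r s0 L ^ deg l0 L"
    using Sol_pow[OF sy l0(2)] Sol_pow[OF sr l0(2)] a(3) r(2) by simp
  then obtain c :: int where c: "snd y L = flow r s0 L * cis (2 * pi * of_int c / real (deg l0 L))"
    using unit_pow_eq_imp_cis[OF Sol_norm[OF sr] Sol_norm[OF sy] _ deg_pos] by blast
  have deg_0L: "deg 0 L = deg 0 l0 * deg l0 L"
    and deg_0L': "deg 0 L = deg 0 j * deg j L"
    and deg_0l0: "deg 0 l0 = deg 0 j * deg j l0"
    using deg_trans[OF le0 l0(2)] deg_trans[OF le0 order_trans[OF l0]] deg_trans[OF le0 l0(1)] .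
  have "2 * pi * (real (deg 0 l0) * of_int c) / real (deg 0 L) = 2 * pi * of_int c / real (deg l0 L)"
    using deg_pos[of 0 l0] by (simp add: deg_0L)
  then have "flow (r + real (deg 0 l0) * of_int c) s0 L = snd y L"
    by (simp add: flow_shift c)
  moreover have "real (deg 0 l0) * of_int c = real (deg 0 j) * of_int (u * c * k0) + real (deg 0 L) * of_int (v * c)"
  proof -
    have "real (deg j l0) = of_int u * of_int k0 + of_int v * real (deg j L)"
      using arg_cong[OF bezout, of real_of_int] by simp
    then show ?thesis by (simp add: deg_0L' deg_0l0 algebra_simps)
  qed
  ultimately have "flow (r + real (deg 0 j) * of_int (u * c * k0)) s0 L = snd y L"
    using flow_period[of L L "r + real (deg 0 j) * of_int (u * c * k0)" "v * c" s0] by (simp add: add.assoc)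
  moreover have "cover (fst y, r + real (deg 0 j) * of_int (u * c * k0)) \<in> A"
    using Alift_translate[OF r(1) Per_mult[OF k0]] unfolding A_def by (rule imageI)
  ultimately show ?thesis by (intro bexI) (simp_all add: cover_def)
qed

lemma Agree_subset_closure_A:
  assumes "k0 \<in> Per" "k0 \<noteq> 0" shows "\<exists>l0\<ge>j. Agree l0 \<subseteq> closure A"
proof -
  have chain: "int (deg j l) dvd int (deg j l')" if "j \<le> l" "l \<le> l'" for l l'
    using deg_trans[OF that] by simp
  obtain l0 where l0: "l0 \<ge> j" "\<forall>l\<ge>l0. \<exists>u v. int (deg j l0) = u * k0 + v * int (deg j l)"
    using gcd_chain_stabilises[where d = "\<lambda>l. int (deg j l)", OF assms(2) chain] by blast
  have "y \<in> closure A" if y: "y \<in> Agree l0" for y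
    unfolding closure_iff_nhds_not_empty
  proof (intro allI impI)
    fix T S assume S: "S \<subseteq> T" "open S" "y \<in> S"
    have sy: "snd y \<in> Sol" using y Agree_subset_cylinder cylinder_Sol by blast
    obtain d l1 e where "d > 0" "e > 0"
      and near: "\<forall>t' s'. \<bar>t' - fst y\<bar> < d \<longrightarrow> s' \<in> Sol \<longrightarrow> norm (s' l1 - snd y l1) < e \<longrightarrow> (t', s') \<in> S"
      using product_nbhd_level[OF S(2) _ sy, of "fst y"] S(3) by auto
    obtain u v where "int (deg j l0) = u * k0 + v * int (deg j (max l1 l0))"
      using l0(2)[rule_format, OF max.cobounded2] by blast
    then have "\<exists>a\<in>A. fst a = fst y \<and> snd a (max l1 l0) = snd y (max l1 l0)"
      by (rule Agree_approx[OF assms(1) l0(1) max.cobounded2 _ y])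
    then obtain a where a: "a \<in> A" "fst a = fst y" "snd a (max l1 l0) = snd y (max l1 l0)"
      by blast
    have sa: "snd a \<in> Sol" using a(1) A_subset_cylinder cylinder_Sol by blast
    have "snd a l1 = snd y l1" using Sol_eq_below[OF sa sy a(3)] by simp
    then have "(fst a, snd a) \<in> S" using near sa a(2) \<open>d > 0\<close> \<open>e > 0\<close> by simp
    then show "A \<inter> T \<noteq> {}" using a(1) S(1) by auto
  qed
  then show ?thesis using l0(1) by blast
qed

lemma exists_connected_openin_between:
  "\<exists>V. openin (top_of_set ({0..1} \<times> Sol)) V \<and> connected V \<and> M \<subseteq> V \<and> V \<subseteq> cylinder j W"
proof -
  obtain k0 where "k0 \<in> Per" "k0 \<noteq> 0" using Per_nontrivial by blast
  then obtain l0 where l0: "j \<le> l0" "Agree l0 \<subseteq> closure A"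
    using Agree_subset_closure_A by blast
  have "connected (Agree l0)"
    using connected_intermediate_closure[OF connected_A A_subset_Agree l0(2)] .
  then show ?thesis
    using openin_Agree[OF l0(1)] M_subset_Agree[OF l0(1)] Agree_subset_cylinder by blast
qed

end

context solenoid_seq
begin

theorem fupcon_Sol:
  fixes M U :: "(real \<times> (nat \<Rightarrow> complex)) set"
  assumes M: "compact M" "connected M" "M \<noteq> {}" "M \<subseteq> {0..1} \<times> Sol" "snd ` M = Sol"
    and U: "openin (top_of_set ({0..1} \<times> Sol)) U" "M \<subseteq> U"
  shows "\<exists>V. openin (top_of_set ({0..1} \<times> Sol)) V \<and> connected V \<and> M \<subseteq> V \<and> V \<subseteq> U"
proof -
  obtain j W where W: "open W" "M \<subseteq> cylinder j W" "cylinder j W \<subseteq> U"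
    using compact_subset_cylinder[OF M(1,4) U] by blast
  obtain t0 s0 where "(t0, s0) \<in> M" using M(3) by auto
  then interpret cylinder_continuum n M j W t0 s0
    using M W by unfold_locales auto
  show ?thesis using exists_connected_openin_between W(3) by blast
qed

end

theorem fupcon_solenoid_inverse_limit:
  assumes "\<And>i. n i \<ge> 2"
  shows "fupcon (top_of_set {0..1::real}) (solenoid_inverse_limit n)"
proof -
  interpret solenoid_seq n by unfold_locales (rule assms)
  have Sol: "solenoid_inverse_limit n = top_of_set Sol"
    by (simp add: solenoid_inverse_limit_def euclidean_product_topology Sol_def)
  show ?thesis
    unfolding fupcon_def Sol prod_topology_subtopology_eu continuum_in_def
  proof (intro allI impI, elim conjE)
    fix M U
    assume "M \<noteq> {}" "compactin (top_of_set ({0..1} \<times> Sol)) M"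
      "connectedin (top_of_set ({0..1} \<times> Sol)) M"
      "fst ` M = topspace (top_of_set {0..1::real})" "snd ` M = topspace (top_of_set Sol)"
      "openin (top_of_set ({0..1} \<times> Sol)) U" "M \<subseteq> U"
    then obtain V where V: "openin (top_of_set ({0..1} \<times> Sol)) V" "connected V" "M \<subseteq> V" "V \<subseteq> U"
      using fupcon_Sol[of M U] by (auto simp: compactin_subtopology connectedin_subtopology)
    then show "\<exists>V. openin (top_of_set ({0..1} \<times> Sol)) V \<and>
        connectedin (top_of_set ({0..1} \<times> Sol)) V \<and> M \<subseteq> V \<and> V \<subseteq> U"
      using openin_imp_subset[OF V(1)] by (auto simp: connectedin_subtopology)
  qed
qed

theorem theorem1:
  fixes S :: "'a topology"
  assumes "solenoid S"
  shows "fupcon (top_of_set {0..1::real}) S"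
proof -
  obtain n where "\<forall>i. n i \<ge> 2" "S homeomorphic_space solenoid_inverse_limit n"
    using assms unfolding solenoid_def by blast
  then show ?thesis
    using fupcon_solenoid_inverse_limit fupcon_homeomorphic_space by metis
qed

end
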